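(* Let $G$ be a graph of order $n$. If $\alpha(G)\ge n-F(D_n)$, then $G$ is Diophantine.
   Context: A graph $G$ with $n$ vertices is Diophantine if there is a bijection $f:V(G)\to\{1,\dots,n\}$ with $\gcd(f(u),f(v))\mid n$ for every edge $uv$. $D_n$ is the graph on $\{1,\dots,n\}$ with distinct $a,b$ adjacent iff $\gcd(a,b)\mid n$ (the maximal Diophantine graph of order $n$). $\alpha(G)$ is the independence number of $G$, and $F(D_n)$ is the number of vertices of degree $n-1$ in $D_n$. *)

theory Defs
  imports Main
begin

definition simple_graph :: "'a set \<Rightarrow> ('a \<Rightarrow> 'a \<Rightarrow> bool) \<Rightarrow> bool" where
  "simple_graph V E \<longleftrightarrow> finite V \<and> (\<forall>u v. E u v \<longrightarrow> u \<in> V \<and> v \<in> V)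
     \<and> (\<forall>u v. E u v \<longrightarrow> E v u) \<and> (\<forall>u. \<not> E u u)"

definition diophantine :: "'a set \<Rightarrow> ('a \<Rightarrow> 'a \<Rightarrow> bool) \<Rightarrow> bool" where
  "diophantine V E \<longleftrightarrow> (\<exists>f :: 'a \<Rightarrow> nat. bij_betw f V {1..card V} \<and>
     (\<forall>u v. E u v \<longrightarrow> gcd (f u) (f v) dvd card V))"

definition independent_set :: "'a set \<Rightarrow> ('a \<Rightarrow> 'a \<Rightarrow> bool) \<Rightarrow> 'a set \<Rightarrow> bool" where
  "independent_set V E S \<longleftrightarrow> S \<subseteq> V \<and> (\<forall>u\<in>S. \<forall>v\<in>S. \<not> E u v)"

definition independence_number :: "'a set \<Rightarrow> ('a \<Rightarrow> 'a \<Rightarrow> bool) \<Rightarrow> nat" where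
  "independence_number V E = Max (card ` {S. independent_set V E S})"

definition D_adj :: "nat \<Rightarrow> nat \<Rightarrow> nat \<Rightarrow> bool" where
  "D_adj n a b \<longleftrightarrow> a \<in> {1..n} \<and> b \<in> {1..n} \<and> a \<noteq> b \<and> gcd a b dvd n"

definition F_D :: "nat \<Rightarrow> nat" where
  "F_D n = card {a \<in> {1..n}. card {b \<in> {1..n}. D_adj n a b} = n - 1}"

end

theory Submission
  imports Defs
begin

text \<open>Every edge of G has an endpoint outside a maximum independent set I, and there are
  at most F(D_n) such endpoints. Give them labels that are full-degree vertices of D_n,
  i.e. labels a with gcd a b dividing n for every other label b, and label I arbitrarily
  with the remaining numbers: then every edge carries a label of this kind.\<close>

lemma exists_bij_betw_mapping_subset:
  assumes "finite A" "finite B" "card A = card B"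
    and "A' \<subseteq> A" "B' \<subseteq> B" "card A' = card B'"
  shows "\<exists>f. bij_betw f A B \<and> f ` A' = B'"
proof -
  have fin': "finite A'" "finite B'" using assms finite_subset by auto
  obtain g where g: "bij_betw g A' B'" using finite_same_card_bij[OF fin'] assms(6) by blast
  have "card (A - A') = card (B - B')"
    using assms fin' by (simp add: card_Diff_subset)
  then obtain h where h: "bij_betw h (A - A') (B - B')"
    using finite_same_card_bij assms(1,2) by (metis finite_Diff)
  define f where "f x = (if x \<in> A' then g x else h x)" for x
  have "bij_betw f A' B'" using g by (rule bij_betw_cong[THEN iffD1, rotated]) (simp add: f_def)
  moreover have "bij_betw f (A - A') (B - B')"
    using h by (rule bij_betw_cong[THEN iffD1, rotated]) (simp add: f_def)
  ultimately have "bij_betw f (A' \<union> (A - A')) (B' \<union> (B - B'))"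
    by (rule bij_betw_combine) blast
  moreover have "A' \<union> (A - A') = A" "B' \<union> (B - B') = B" using assms(4,5) by auto
  ultimately have "bij_betw f A B" by simp
  moreover have "f ` A' = B'" using \<open>bij_betw f A' B'\<close> by (simp add: bij_betw_def)
  ultimately show ?thesis by blast
qed

lemma independent_set_of_size_independence_number:
  assumes "finite V"
  obtains I where "independent_set V E I" "card I = independence_number V E"
proof -
  let ?C = "card ` {S. independent_set V E S}"
  have "{S. independent_set V E S} \<subseteq> Pow V" by (auto simp: independent_set_def)
  hence "finite ?C" using assms finite_subset by blast
  moreover have "independent_set V E {}" by (simp add: independent_set_def)
  hence "?C \<noteq> {}" by blast
  ultimately have "independence_number V E \<in> ?C"
    unfolding independence_number_def by (rule Max_in)
  thus ?thesis using that by (auto simp: image_iff)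
qed

lemma gcd_dvd_if_full_degree_in_D:
  assumes "a \<in> {1..n}" "card {b \<in> {1..n}. D_adj n a b} = n - 1"
    and "b \<in> {1..n}" "b \<noteq> a"
  shows "gcd a b dvd n"
proof -
  have sub: "{b \<in> {1..n}. D_adj n a b} \<subseteq> {1..n} - {a}" by (auto simp: D_adj_def)
  have "card ({1..n} - {a}) = n - 1" using assms(1) by simp
  hence "{b \<in> {1..n}. D_adj n a b} = {1..n} - {a}"
    using card_subset_eq[OF _ sub] assms(2) by simp
  hence "b \<in> {b \<in> {1..n}. D_adj n a b}" using assms(3,4) by blast
  thus ?thesis by (simp add: D_adj_def)
qed

lemma diophantine_if_cover_labelled_by_universal_labels:
  assumes G: "simple_graph V E"
    and I: "independent_set V E I"
    and S: "S \<subseteq> {1..card V}"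
    and universal: "\<And>a b. a \<in> S \<Longrightarrow> b \<in> {1..card V} \<Longrightarrow> b \<noteq> a \<Longrightarrow> gcd a b dvd card V"
    and few: "card (V - I) \<le> card S"
  shows "diophantine V E"
proof -
  have "finite V" using G by (simp add: simple_graph_def)
  obtain S' where S': "S' \<subseteq> S" "card S' = card (V - I)"
    using few obtain_subset_with_card_n by metis
  have "S' \<subseteq> {1..card V}" using S'(1) S by blast
  with \<open>finite V\<close> S'(2) obtain f where f: "bij_betw f V {1..card V}" "f ` (V - I) = S'"
    using exists_bij_betw_mapping_subset[of V "{1..card V}" "V - I" S'] by auto
  have edge_label: "gcd (f u) (f v) dvd card V" if "E u v" "u \<notin> I" for u v
  proof -
    have "u \<in> V" "v \<in> V" "u \<noteq> v" using G \<open>E u v\<close> by (auto simp: simple_graph_def)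
    hence "f v \<noteq> f u" "f v \<in> {1..card V}"
      using f(1) by (metis bij_betw_iff_bijections, meson bij_betwE)
    moreover have "f u \<in> S" using f(2) S'(1) \<open>u \<in> V\<close> \<open>u \<notin> I\<close> by blast
    ultimately show ?thesis using universal by blast
  qed
  have "gcd (f u) (f v) dvd card V" if "E u v" for u v
  proof (cases "u \<in> I")
    case True
    have "E v u" using G \<open>E u v\<close> by (simp add: simple_graph_def)
    moreover have "v \<notin> I" using I True \<open>E u v\<close> by (auto simp: independent_set_def)
    ultimately show ?thesis using edge_label by (metis gcd.commute)
  qed (use edge_label that in blast)
  thus ?thesis unfolding diophantine_def using f(1) by blast
qed

theorem mainTheorem13:
  fixes V :: "'a set" and E :: "'a \<Rightarrow> 'a \<Rightarrow> bool" and n :: nat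
  assumes "simple_graph V E"
    and "card V = n"
    and "independence_number V E \<ge> n - F_D n"
  shows "diophantine V E"
proof -
  have "finite V" using assms(1) by (simp add: simple_graph_def)
  then obtain I where I: "independent_set V E I" "card I = independence_number V E"
    by (rule independent_set_of_size_independence_number)
  define S where "S = {a \<in> {1..n}. card {b \<in> {1..n}. D_adj n a b} = n - 1}"
  have "I \<subseteq> V" using I(1) by (simp add: independent_set_def)
  hence "card (V - I) = n - card I"
    using \<open>finite V\<close> assms(2) by (simp add: card_Diff_subset finite_subset)
  also have "\<dots> \<le> card S" using I(2) assms(3) unfolding F_D_def S_def by linarith
  finally have few: "card (V - I) \<le> card S" .
  have "S \<subseteq> {1..card V}" using assms(2) by (auto simp: S_def)
  moreover have "gcd a b dvd card V" if "a \<in> S" "b \<in> {1..card V}" "b \<noteq> a" for a b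
    using that assms(2) gcd_dvd_if_full_degree_in_D[of a n b] by (simp add: S_def)
  ultimately show ?thesis
    using diophantine_if_cover_labelled_by_universal_labels[OF assms(1) I(1)] few by blast
qed

end
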